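(* Let $\mathcal{D}=\{(\mathbf{x}_i,y_i)\}_{i\in\mathcal{D}}$ be a finite training set with inputs $\mathcal{X}=\{\mathbf{x}_i\}_{i\in\mathcal{D}}$, let $\boldsymbol{\phi}_i=\boldsymbol{\phi}(\mathbf{x}_i)\in\mathbb{R}^P$, and consider the generalized linear model $f_{\mathbf{w}}^i=\boldsymbol{\phi}_i^\top\mathbf{w}$, $\mathbf{w}\in\mathbb{R}^P$. Let $A$ be the (strictly convex, differentiable) log-partition function of a scalar exponential family, $h=A'$, and $\ell(y,h(f))=-yf+A(f)$, with $\ell_i(\mathbf{w})=\ell(y_i,h(f_{\mathbf{w}}^i))$. Let $\mathcal{R},\mathcal{G}:\mathbb{R}^P\to\mathbb{R}$ be strictly convex differentiable regularizers, and let $$\mathbf{w}_*=\arg\min_{\mathbf{w}}\sum_{i\in\mathcal{D}}\ell_i(\mathbf{w})+\mathcal{R}(\mathbf{w}),\qquad \mathbf{w}_{\mathcal{G}}=\arg\min_{\mathbf{w}}\sum_{i\in\mathcal{D}}\ell_i(\mathbf{w})+\mathcal{G}(\mathbf{w}).$$ Let $\boldsymbol{\eta}_*=\nabla\mathcal{R}(\mathbf{w}_* )$, let $\mathcal{R}^*$ be the convex conjugate of $\mathcal{R}$, and define $$\mathcal{B}_{\mathcal{G}\mathcal{R}}(\mathbf{w}\|\mathbf{w}_* )=\mathcal{G}(\mathbf{w})+\mathcal{R}^*(\boldsymbol{\eta}_* )-\mathbf{w}^\top\boldsymbol{\eta}_*,$$ $$\mathcal{K}(\mathbf{w};\mathbf{w}_*,\mathcal{M})=\sum_{i\in\mathcal{M}}\ell\big(h(f_{\mathbf{w}_*}^i),h(f_{\mathbf{w}}^i)\big)+\mathcal{B}_{\mathcal{G}\mathcal{R}}(\mathbf{w}\|\mathbf{w}_*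 ),\qquad \hat{\mathbf{w}}_{\mathcal{G}}=\arg\min_{\mathbf{w}}\mathcal{K}(\mathbf{w};\mathbf{w}_*,\mathcal{M}),$$ where $\ell(h(f_{\mathbf{w}_*}^i),h(f_{\mathbf{w}}^i))=-h(f_{\mathbf{w}_*}^i)f_{\mathbf{w}}^i+A(f_{\mathbf{w}}^i)$. If $\mathcal{M}=\mathcal{X}$, then $\mathbf{w}_{\mathcal{G}}=\hat{\mathbf{w}}_{\mathcal{G}}$.
   Context: All minimizations are over $\mathbb{R}^P$. $\mathbf{w}_*$ is the base model trained with regularizer $\mathcal{R}$; the task is to obtain the model trained with a new regularizer $\mathcal{G}$ using only $\mathbf{w}_*$ and the memory inputs $\mathcal{M}$ (here the full input set $\mathcal{X}$), with the base model's predictions $h(f_{\mathbf{w}_*}^i)$ used in place of labels. *)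

theory Defs
  imports "HOL-Analysis.Analysis"
begin

definition strict_convex_on :: "'a::real_vector set \<Rightarrow> ('a \<Rightarrow> real) \<Rightarrow> bool" where
  "strict_convex_on S f \<longleftrightarrow>
     (\<forall>x\<in>S. \<forall>y\<in>S. x \<noteq> y \<longrightarrow> (\<forall>u::real. 0 < u \<longrightarrow> u < 1 \<longrightarrow>
        f ((1 - u) *\<^sub>R x + u *\<^sub>R y) < (1 - u) * f x + u * f y))"

definition grad :: "('a::real_inner \<Rightarrow> real) \<Rightarrow> 'a \<Rightarrow> 'a" where
  "grad F w = (THE g. (F has_derivative (\<lambda>v. g \<bullet> v)) (at w))"

text \<open>Convex conjugate F^*(eta) = sup_w (w . eta - F w) (real-valued supremum;
  used only at points where the supremum is finite).\<close>
definition conj_fun :: "('a::real_inner \<Rightarrow> real) \<Rightarrow> 'a \<Rightarrow> real" where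
  "conj_fun F \<eta> = (SUP w. w \<bullet> \<eta> - F w)"

definition is_argmin :: "('a \<Rightarrow> real) \<Rightarrow> 'a \<Rightarrow> bool" where
  "is_argmin F w \<longleftrightarrow> (\<forall>v. F w \<le> F v)"

text \<open>Loss of the exponential family: ell(y, h(f)) = - y f + A f.\<close>
definition ell :: "(real \<Rightarrow> real) \<Rightarrow> real \<Rightarrow> real \<Rightarrow> real" where
  "ell A y f = - y * f + A f"

end

theory Submission
  imports Defs
begin

text \<open>
  At \<open>w\<^sub>*\<close> the first-order condition of the \<open>R\<close>-regularised objective reads
  \<open>\<nabla>R(w\<^sub>*) = \<Sum>\<^sub>i (y\<^sub>i - h(\<phi>\<^sub>i \<bullet> w\<^sub>*)) \<phi>\<^sub>i\<close>. Hence the linear term \<open>-w \<bullet> \<nabla>R(w\<^sub>*)\<close>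
  turns each pseudo-label \<open>h(\<phi>\<^sub>i \<bullet> w\<^sub>*)\<close> back into the true label \<open>y\<^sub>i\<close>: \<open>K\<close> is the
  \<open>G\<close>-regularised training objective plus the constant \<open>R\<^sup>*(\<nabla>R(w\<^sub>*))\<close>, whose (possibly
  junk) value therefore never matters. That objective is strictly convex, so \<open>w\<^sub>G\<close> is its
  only minimiser.
\<close>

lemma strict_convex_on_imp_convex_on:
  assumes "strict_convex_on S f" "convex S"
  shows "convex_on S f"
  unfolding convex_on_def
proof (intro conjI assms(2) ballI allI impI)
  fix x y and u v :: real
  assume xy: "x \<in> S" "y \<in> S" and uv: "0 \<le> u" "0 \<le> v" "u + v = 1"
  consider "x = y" | "u = 0" | "v = 0" | "x \<noteq> y" "0 < v" "v < 1"
    using uv by force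
  then show "f (u *\<^sub>R x + v *\<^sub>R y) \<le> u * f x + v * f y"
  proof cases
    case 1
    then show ?thesis
      using uv by (simp flip: scaleR_add_left distrib_right)
  next
    case 4
    have "u = 1 - v" using uv by simp
    then show ?thesis
      using assms(1) 4 xy unfolding strict_convex_on_def by (simp add: less_imp_le)
  qed (use uv in simp_all)
qed

lemma strict_convex_on_add:
  assumes "convex_on S f" "strict_convex_on S g"
  shows "strict_convex_on S (\<lambda>x. f x + g x)"
  unfolding strict_convex_on_def
proof (intro ballI allI impI)
  fix x y and u :: real
  assume "x \<in> S" "y \<in> S" "x \<noteq> y" "0 < u" "u < 1"
  then have "f ((1 - u) *\<^sub>R x + u *\<^sub>R y) \<le> (1 - u) * f x + u * f y"
    and "g ((1 - u) *\<^sub>R x + u *\<^sub>R y) < (1 - u) * g x + u * g y"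
    using assms unfolding convex_on_def strict_convex_on_def by simp_all
  then show "f ((1 - u) *\<^sub>R x + u *\<^sub>R y) + g ((1 - u) *\<^sub>R x + u *\<^sub>R y)
      < (1 - u) * (f x + g x) + u * (f y + g y)"
    by (simp add: algebra_simps)
qed

lemma convex_on_compose_linear:
  assumes "convex_on UNIV f" "linear g"
  shows "convex_on UNIV (\<lambda>x. f (g x))"
  using assms unfolding convex_on_def by (simp add: linear_add linear_scale)

lemma convex_on_sum_fun:
  assumes "finite I" "convex S" "\<And>i. i \<in> I \<Longrightarrow> convex_on S (f i)"
  shows "convex_on S (\<lambda>x. \<Sum>i\<in>I. f i x)"
  using assms(1,3)
  by (induction I rule: finite_induct) (auto simp: convex_on_const assms(2))

lemma is_argmin_strict_convex_unique:
  assumes "strict_convex_on UNIV F" "is_argmin F u" "is_argmin F v"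
  shows "u = v"
proof (rule ccontr)
  assume "u \<noteq> v"
  have "(0::real) < 1/2" "(1::real)/2 < 1" by simp_all
  with \<open>u \<noteq> v\<close> have "F ((1 - 1/2) *\<^sub>R u + (1/2) *\<^sub>R v) < (1 - 1/2) * F u + (1/2) * F v"
    using assms(1) unfolding strict_convex_on_def by blast
  moreover have "F u \<le> F ((1 - 1/2) *\<^sub>R u + (1/2) *\<^sub>R v)" "F v \<le> F u"
    using assms(2,3) unfolding is_argmin_def by blast+
  ultimately show False by simp
qed

lemma is_argmin_add_const: "is_argmin (\<lambda>x. F x + c) = is_argmin F"
  unfolding is_argmin_def by simp

lemma has_derivative_imp_grad_eq:
  assumes "(F has_derivative (\<lambda>v. g \<bullet> v)) (at w)"
  shows "grad F w = g"
  unfolding grad_def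
proof (rule the_equality)
  fix g' assume "(F has_derivative (\<lambda>v. g' \<bullet> v)) (at w)"
  then have "(\<lambda>v. g' \<bullet> v) = (\<lambda>v. g \<bullet> v)"
    using assms by (rule has_derivative_unique)
  then have "(g' - g) \<bullet> (g' - g) = 0"
    by (metis inner_diff_left right_minus_eq)
  then show "g' = g" by simp
qed (fact assms)

lemma grad_eq_at_argmin_add:
  assumes L: "(L has_derivative (\<lambda>v. g \<bullet> v)) (at w)"
    and "R differentiable (at w)"
    and "is_argmin (\<lambda>x. L x + R x) w"
  shows "grad R w = - g"
proof -
  obtain DR where DR: "(R has_derivative DR) (at w)"
    using assms(2) unfolding differentiable_def by blast
  have "(\<lambda>v. g \<bullet> v + DR v) = (\<lambda>v. 0)"
    by (rule has_derivative_local_min[OF has_derivative_add[OF L DR]])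
      (use assms(3) in \<open>simp add: is_argmin_def\<close>)
  then have "DR = (\<lambda>v. - g \<bullet> v)"
    by (simp add: fun_eq_iff add_eq_0_iff)
  then show ?thesis
    using DR by (simp add: has_derivative_imp_grad_eq)
qed

lemma convex_on_ell_loss:
  assumes "finite D" "convex_on UNIV A"
  shows "convex_on UNIV (\<lambda>w. \<Sum>i\<in>D. ell A (c i) (\<phi> i \<bullet> w))"
proof (rule convex_on_sum_fun[OF assms(1) convex_UNIV])
  fix i
  have "convex_on UNIV (ell A (c i))"
    unfolding ell_def
    by (intro convex_on_add assms(2) convex_on_linorderI) (auto simp: algebra_simps)
  then show "convex_on UNIV (\<lambda>w. ell A (c i) (\<phi> i \<bullet> w))"
    by (rule convex_on_compose_linear)
      (simp add: bounded_linear.linear bounded_linear_inner_right)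
qed

lemma has_derivative_ell_loss:
  assumes "\<And>x. A differentiable (at x)"
  shows "((\<lambda>w. \<Sum>i\<in>D. ell A (c i) (\<phi> i \<bullet> w)) has_derivative
           (\<lambda>v. (\<Sum>i\<in>D. (deriv A (\<phi> i \<bullet> w) - c i) *\<^sub>R \<phi> i) \<bullet> v)) (at w)"
proof -
  have "(A has_derivative (\<lambda>t. deriv A x * t)) (at x)" for x
    using assms by (metis DERIV_deriv_iff_real_differentiable has_field_derivative_def)
  then have "((\<lambda>w. A (\<phi> i \<bullet> w)) has_derivative (\<lambda>v. deriv A (\<phi> i \<bullet> w) * (\<phi> i \<bullet> v))) (at w)"
    for i
    using has_derivative_compose[of "\<lambda>w. \<phi> i \<bullet> w" "\<lambda>v. \<phi> i \<bullet> v" w UNIV A]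
    by (simp add: o_def bounded_linear.has_derivative[OF bounded_linear_inner_right]
        has_derivative_ident)
  then have "((\<lambda>w. \<Sum>i\<in>D. ell A (c i) (\<phi> i \<bullet> w)) has_derivative
           (\<lambda>v. \<Sum>i\<in>D. - c i * (\<phi> i \<bullet> v) + deriv A (\<phi> i \<bullet> w) * (\<phi> i \<bullet> v))) (at w)"
    unfolding ell_def
    by (intro has_derivative_sum has_derivative_add has_derivative_mult_right
        bounded_linear.has_derivative[OF bounded_linear_inner_right] has_derivative_ident)
  then show ?thesis
    by (simp add: inner_sum_left algebra_simps)
qed

lemma ell_relabel: "ell A h f + (h - y) * f = ell A y f"
  unfolding ell_def by (simp add: algebra_simps)

theorem theorem2:
  fixes D :: "'i set"
    and \<phi> :: "'i \<Rightarrow> real ^ 'p"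
    and y :: "'i \<Rightarrow> real"
    and A :: "real \<Rightarrow> real"
    and R G :: "real ^ 'p \<Rightarrow> real"
    and w_star w_G :: "real ^ 'p"
  assumes finD: "finite D"
    and A_sc: "strict_convex_on UNIV A"
    and A_diff: "\<And>x. A differentiable (at x)"
    and R_sc: "strict_convex_on UNIV R"
    and R_diff: "\<And>w. R differentiable (at w)"
    and G_sc: "strict_convex_on UNIV G"
    and G_diff: "\<And>w. G differentiable (at w)"
    and w_star_min: "is_argmin (\<lambda>w. (\<Sum>i\<in>D. ell A (y i) (\<phi> i \<bullet> w)) + R w) w_star"
    and w_G_min: "is_argmin (\<lambda>w. (\<Sum>i\<in>D. ell A (y i) (\<phi> i \<bullet> w)) + G w) w_G"
  shows "{w_hat. is_argmin
            (\<lambda>w. (\<Sum>i\<in>D. ell A (deriv A (\<phi> i \<bullet> w_star)) (\<phi> i \<bullet> w))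
                 + (G w + conj_fun R (grad R w_star) - w \<bullet> grad R w_star))
            w_hat} = {w_G}"
proof -
  define h where "h i = deriv A (\<phi> i \<bullet> w_star)" for i
  define L_G where "L_G w = (\<Sum>i\<in>D. ell A (y i) (\<phi> i \<bullet> w)) + G w" for w
  have grad_R: "grad R w_star = - (\<Sum>i\<in>D. (h i - y i) *\<^sub>R \<phi> i)"
    unfolding h_def
    by (rule grad_eq_at_argmin_add[OF has_derivative_ell_loss[OF A_diff] R_diff w_star_min])
  have K_eq: "(\<lambda>w. (\<Sum>i\<in>D. ell A (h i) (\<phi> i \<bullet> w))
                 + (G w + conj_fun R (grad R w_star) - w \<bullet> grad R w_star))
      = (\<lambda>w. L_G w + conj_fun R (grad R w_star))" (is "?K = _")
  proof
    fix w
    have "(\<Sum>i\<in>D. ell A (h i) (\<phi> i \<bullet> w)) - w \<bullet> grad R w_star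
        = (\<Sum>i\<in>D. ell A (h i) (\<phi> i \<bullet> w) + (h i - y i) * (\<phi> i \<bullet> w))"
      by (simp add: grad_R inner_sum_right inner_commute sum.distrib)
    also have "\<dots> = (\<Sum>i\<in>D. ell A (y i) (\<phi> i \<bullet> w))"
      by (simp only: ell_relabel)
    finally show "?K w = L_G w + conj_fun R (grad R w_star)"
      unfolding L_G_def by linarith
  qed
  have L_G_strict: "strict_convex_on UNIV L_G"
    unfolding L_G_def
    using convex_on_ell_loss[OF finD strict_convex_on_imp_convex_on[OF A_sc convex_UNIV]] G_sc
    by (rule strict_convex_on_add)
  have L_G_min: "is_argmin L_G w_G"
    using w_G_min unfolding L_G_def .
  have "{w. is_argmin L_G w} = {w_G}"
    using is_argmin_strict_convex_unique[OF L_G_strict L_G_min] L_G_min by blast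
  then show ?thesis
    by (simp only: h_def[symmetric] K_eq is_argmin_add_const)
qed

end
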